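(* Let $(\Omega,\mathcal{F},P)=([0,1],\mathcal{B}([0,1]),\lambda)$ with $\lambda$ Lebesgue measure. Let $(\varepsilon_n)\subset(0,1)$ be a sequence with $\varepsilon_n\to0$ and, for each $n$, let $S^n_t=0$ for $t\in[0,1)$ and $S^n_1(\omega)=-\frac{1}{\sqrt{\omega}}$ for $\omega\in[0,\varepsilon_n)$, $S^n_1(\omega)=\frac{1}{(1-\omega)^{1/(n+1)}}$ for $\omega\in[\varepsilon_n,1]$, where $(\varepsilon_n)$ is chosen such that $E[S^n_1]=1$ for all $n$. Consider the filtration generated by $(S^n)_{n\in\mathbb{N}}$ (so that predictable strategies are deterministic and the terminal value of a portfolio in the first $n$ assets has the form $\sum_{k=1}^n c_kS^k_1$ with constants $c_k\in\mathbb{R}$). Then: (1) for $n\in\mathbb{N}$ and $c_1,\dots,c_n\in\mathbb{R}$ such that $X_1=\sum_{k=1}^nc_kS^k_1\ge-1$ a.s., one has $\sum_{k\in G_+}c_k\le\sum_{k\in G_-}|c_k|$, where $G_+=\{j:c_j>0\}$, $G_-=\{j:c_j<0\}$; (2) $P=\lambda$ is a separating measure for $\mathcal{X}$, i.e. $E_P[X_1]\le0$ for all $X\in\mathcal{X}$.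
   Context: For this market, $\mathcal{X}^n_1$ denotes the set of stochastic integrals $(\mathbf{H}\bullet\mathbf{S}^n)$, $\mathbf{S}^n=(S^1,\dots,S^n)$, with $\mathbf{H}$ $\mathbb{R}^n$-valued predictable $\mathbf{S}^n$-integrable and $(\mathbf{H}\bullet\mathbf{S}^n)_t\ge-1$ for all $t$; $\mathcal{X}_1$ is the closure of $\bigcup_{n\ge1}\mathcal{X}^n_1$ in the Emery topology (metric $d_{\mathbb{S}}(X,Y)=\sup_{K}E[\sup_{t\le1}|(K\bullet(X-Y))_t|\wedge1]$ over simple predictable $K$, $\|K\|_\infty\le1$), and $\mathcal{X}=\bigcup_{\lambda>0}\lambda\mathcal{X}_1$. *)

theory Defs
  imports "HOL-Probability.Probability"
begin

definition PP :: "real measure" where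
  "PP = restrict_space lborel {0..1}"

text \<open>Terminal value S^n_1 of the n-th asset (n \<ge> 1); S^n_t = 0 for t < 1.\<close>
definition S :: "(nat \<Rightarrow> real) \<Rightarrow> nat \<Rightarrow> real \<Rightarrow> real" where
  "S eps n \<omega> = (if \<omega> < eps n then - 1 / sqrt \<omega>
                  else 1 / ((1 - \<omega>) powr (1 / (real n + 1))))"

definition port :: "(nat \<Rightarrow> real) \<Rightarrow> nat \<Rightarrow> (nat \<Rightarrow> real) \<Rightarrow> real \<Rightarrow> real" where
  "port eps n c \<omega> = (\<Sum>k\<in>{1..n}. c k * S eps k \<omega>)"

text \<open>X^n_1: (terminal values of) 1-admissible stochastic integrals in the first n assets.
  Since all processes vanish on [0,1), a process is identified with its terminal value.\<close>
definition Xn1 :: "(nat \<Rightarrow> real) \<Rightarrow> nat \<Rightarrow> (real \<Rightarrow> real) set" where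
  "Xn1 eps n = {port eps n c | c. AE \<omega> in PP. port eps n c \<omega> \<ge> -1}"

text \<open>Emery distance between processes that vanish on [0,1) and jump at time 1:
  simple predictable integrands act at time 1 as deterministic constants a with |a| \<le> 1.\<close>
definition dS :: "(real \<Rightarrow> real) \<Rightarrow> (real \<Rightarrow> real) \<Rightarrow> real" where
  "dS X Y = (SUP a\<in>{-1..1}. \<integral>\<omega>. min \<bar>a * (X \<omega> - Y \<omega>)\<bar> 1 \<partial>PP)"

definition X1 :: "(nat \<Rightarrow> real) \<Rightarrow> (real \<Rightarrow> real) set" where
  "X1 eps = {X \<in> borel_measurable PP. \<exists>Y :: nat \<Rightarrow> real \<Rightarrow> real.
              (\<forall>j. Y j \<in> (\<Union>n\<in>{1..}. Xn1 eps n)) \<and> (\<lambda>j. dS (Y j) X) \<longlonglongrightarrow> 0}"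

definition Xcal :: "(nat \<Rightarrow> real) \<Rightarrow> (real \<Rightarrow> real) set" where
  "Xcal eps = {(\<lambda>\<omega>. l * X \<omega>) | l X. l > 0 \<and> X \<in> X1 eps}"

end

theory Submission
  imports Defs
begin

(* Near omega = 0 every asset equals -1/sqrt omega, so a portfolio equals -(sum of c_k)/sqrt omega
   there; being bounded below by -1 on a set of positive measure forces sum c_k <= 0, which is
   part (1). Since every asset has mean 1, an admissible portfolio Y then has E[Y] = sum c_k <= 0.
   The functional X |-> E[max (min X M) (-1)] is continuous in the Emery distance (the truncation
   is (M+1)-Lipschitz against min |.| 1) and bounded by E[Y] on admissible Y, so it is <= 0 on the
   closure X_1; letting M -> infinity gives E[X^+] <= E[X^-], which is part (2). *)

lemma space_PP: "space PP = {0..1}"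
  by (simp add: PP_def space_restrict_space)

lemma prob_space_PP: "prob_space PP"
proof
  have "emeasure PP {0..1} = emeasure lborel {0..1::real}"
    unfolding PP_def by (rule emeasure_restrict_space) auto
  then show "emeasure PP (space PP) = 1" by (simp add: space_PP)
qed

lemma finite_measure_PP: "finite_measure PP"
  using prob_space_PP by (simp add: prob_space_def)

lemma port_near_zero:
  assumes "\<And>k. k \<in> {1..n} \<Longrightarrow> \<omega> < eps k"
  shows "port eps n c \<omega> = - (\<Sum>k\<in>{1..n}. c k) / sqrt \<omega>"
proof -
  have "port eps n c \<omega> = (\<Sum>k\<in>{1..n}. c k * (- 1 / sqrt \<omega>))"
    unfolding port_def using assms by (intro sum.cong) (auto simp: S_def)
  then show ?thesis by (simp add: sum_divide_distrib sum_negf)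
qed

lemma admissible_port_coeff_sum_nonpos:
  assumes eps_pos: "\<And>k. k \<ge> 1 \<Longrightarrow> 0 < eps k"
    and "n \<ge> 1" and admissible: "AE \<omega> in PP. port eps n c \<omega> \<ge> -1"
  shows "(\<Sum>k\<in>{1..n}. c k) \<le> 0"
proof (rule ccontr)
  define s where "s = (\<Sum>k\<in>{1..n}. c k)"
  assume "\<not> (\<Sum>k\<in>{1..n}. c k) \<le> 0"
  then have "s > 0" by (simp add: s_def)
  define d where "d = min (min (Min (eps ` {1..n})) (s\<^sup>2)) 1"
  have "d > 0"
    using \<open>n \<ge> 1\<close> eps_pos \<open>s > 0\<close> by (simp add: d_def Min_gr_iff)
  have below: "port eps n c \<omega> < -1" if "0 < \<omega>" "\<omega> < d" for \<omega>
  proof -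
    have "\<omega> < eps k" if "k \<in> {1..n}" for k
      using \<open>\<omega> < d\<close> that by (auto simp: d_def)
    then have port: "port eps n c \<omega> = - s / sqrt \<omega>"
      unfolding s_def by (rule port_near_zero)
    have "sqrt \<omega> < sqrt (s\<^sup>2)"
      using \<open>\<omega> < d\<close> by (intro real_sqrt_less_mono) (simp add: d_def)
    then have "sqrt \<omega> < s" using \<open>s > 0\<close> by simp
    then show ?thesis using \<open>0 < \<omega>\<close> port by simp
  qed
  have "AE \<omega> in lborel. \<omega> \<in> {0..1} \<longrightarrow> port eps n c \<omega> \<ge> -1"
    using admissible unfolding PP_def by (subst (asm) AE_restrict_space_iff) auto
  then have "AE \<omega> in lborel. \<omega> \<notin> {0<..<d}"
    by eventually_elim (use below in \<open>force simp: d_def\<close>)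
  then have "emeasure lborel {0<..<d} = 0"
    by (subst (asm) AE_iff_measurable[of "{0<..<d}"]) auto
  then show False using \<open>d > 0\<close> by simp
qed

lemma sum_pos_le_sum_neg_abs:
  fixes f :: "'a \<Rightarrow> 'b::linordered_idom"
  assumes "finite A" and "sum f A \<le> 0"
  shows "(\<Sum>k\<in>{k\<in>A. f k > 0}. f k) \<le> (\<Sum>k\<in>{k\<in>A. f k < 0}. \<bar>f k\<bar>)"
proof -
  have "sum f A = (\<Sum>k\<in>{k\<in>A. f k > 0}. f k) + (\<Sum>k\<in>{k\<in>A. \<not> f k > 0}. f k)"
    using sum.Int_Diff[OF \<open>finite A\<close>, of f "{k. f k > 0}"] by (simp add: Int_def set_diff_eq)
  also have "(\<Sum>k\<in>{k\<in>A. \<not> f k > 0}. f k) = (\<Sum>k\<in>{k\<in>A. f k < 0}. f k)"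
    using \<open>finite A\<close> by (intro sum.mono_neutral_right) auto
  also have "\<dots> = - (\<Sum>k\<in>{k\<in>A. f k < 0}. \<bar>f k\<bar>)"
    by (simp add: sum_negf[symmetric])
  finally show ?thesis using \<open>sum f A \<le> 0\<close> by simp
qed

lemma
  assumes mean_one: "\<And>k. k \<ge> 1 \<Longrightarrow> integrable PP (S eps k) \<and> (\<integral>\<omega>. S eps k \<omega> \<partial>PP) = 1"
  shows integrable_port: "integrable PP (port eps n c)"
    and integral_port: "(\<integral>\<omega>. port eps n c \<omega> \<partial>PP) = (\<Sum>k\<in>{1..n}. c k)"
  using mean_one unfolding port_def[abs_def]
  by (auto simp: Bochner_Integration.integral_sum intro!: sum.cong)

definition truncate :: "real \<Rightarrow> real \<Rightarrow> real" where
  "truncate M x = max (min x M) (-1)"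

lemma truncate_le: "-1 \<le> x \<Longrightarrow> truncate M x \<le> x"
  by (simp add: truncate_def)

lemma abs_truncate_le: "0 \<le> M \<Longrightarrow> \<bar>truncate M x\<bar> \<le> M + 1"
  by (auto simp: truncate_def)

lemma truncate_eq_diff_clipped_parts:
  "0 \<le> M \<Longrightarrow> truncate M x = min (max x 0) M - min (max (-x) 0) 1"
  by (auto simp: truncate_def)

lemma abs_truncate_diff_le:
  assumes "0 \<le> M"
  shows "\<bar>truncate M y - truncate M x\<bar> \<le> (M + 1) * min \<bar>y - x\<bar> 1"
proof (cases "\<bar>y - x\<bar> \<le> 1")
  case True
  have "\<bar>truncate M y - truncate M x\<bar> \<le> \<bar>y - x\<bar>"
    by (auto simp: truncate_def abs_if)
  also have "\<dots> \<le> (M + 1) * \<bar>y - x\<bar>"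
    using \<open>0 \<le> M\<close> by (simp add: algebra_simps)
  finally show ?thesis using True by simp
next
  case False
  then show ?thesis using \<open>0 \<le> M\<close> by (auto simp: truncate_def abs_if)
qed

context finite_measure
begin

lemma integrable_truncate:
  "0 \<le> C \<Longrightarrow> X \<in> borel_measurable M \<Longrightarrow> integrable M (\<lambda>\<omega>. truncate C (X \<omega>))"
  by (rule integrable_const_bound[where B="C + 1"]) (auto simp: abs_truncate_le truncate_def)

lemma integral_truncate_le:
  assumes "0 \<le> C" "integrable M Y" "AE \<omega> in M. Y \<omega> \<ge> -1"
  shows "(\<integral>\<omega>. truncate C (Y \<omega>) \<partial>M) \<le> (\<integral>\<omega>. Y \<omega> \<partial>M)"
  using assms by (intro integral_mono_AE integrable_truncate) (auto elim!: eventually_mono simp: truncate_le)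

lemma integral_truncate_diff_le:
  assumes "0 \<le> C" and [measurable]: "X \<in> borel_measurable M" "Y \<in> borel_measurable M"
  shows "(\<integral>\<omega>. truncate C (X \<omega>) \<partial>M) - (\<integral>\<omega>. truncate C (Y \<omega>) \<partial>M)
           \<le> (C + 1) * (\<integral>\<omega>. min \<bar>Y \<omega> - X \<omega>\<bar> 1 \<partial>M)"
proof -
  have dist: "integrable M (\<lambda>\<omega>. min \<bar>Y \<omega> - X \<omega>\<bar> 1)"
    by (rule integrable_const_bound[where B=1]) auto
  have "(\<integral>\<omega>. truncate C (X \<omega>) \<partial>M) - (\<integral>\<omega>. truncate C (Y \<omega>) \<partial>M)
      = (\<integral>\<omega>. truncate C (X \<omega>) - truncate C (Y \<omega>) \<partial>M)"
    using assms by (simp add: integrable_truncate)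
  also have "\<dots> \<le> (\<integral>\<omega>. (C + 1) * min \<bar>Y \<omega> - X \<omega>\<bar> 1 \<partial>M)"
    using assms dist abs_truncate_diff_le[OF \<open>0 \<le> C\<close>]
    by (intro integral_mono) (auto simp: integrable_truncate abs_le_iff)
  finally show ?thesis by simp
qed

lemma nn_integral_le_if_integral_truncate_nonpos:
  assumes [measurable]: "X \<in> borel_measurable M"
    and truncate_nonpos: "\<And>C. 0 \<le> C \<Longrightarrow> (\<integral>\<omega>. truncate C (X \<omega>) \<partial>M) \<le> 0"
  shows "(\<integral>\<^sup>+\<omega>. ennreal (X \<omega>) \<partial>M) \<le> (\<integral>\<^sup>+\<omega>. ennreal (- X \<omega>) \<partial>M)"
proof -
  have clipped: "(\<integral>\<^sup>+\<omega>. ennreal (min (max (X \<omega>) 0) C) \<partial>M) \<le> (\<integral>\<^sup>+\<omega>. ennreal (- X \<omega>) \<partial>M)"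
    if "0 \<le> C" for C
  proof -
    have pos: "integrable M (\<lambda>\<omega>. min (max (X \<omega>) 0) C)"
      by (rule integrable_const_bound[where B=C]) (use \<open>0 \<le> C\<close> in auto)
    have neg: "integrable M (\<lambda>\<omega>. min (max (- X \<omega>) 0) 1)"
      by (rule integrable_const_bound[where B=1]) auto
    have "(\<integral>\<omega>. min (max (X \<omega>) 0) C \<partial>M) \<le> (\<integral>\<omega>. min (max (- X \<omega>) 0) 1 \<partial>M)"
      using truncate_nonpos[OF \<open>0 \<le> C\<close>] pos neg
      by (simp add: truncate_eq_diff_clipped_parts[OF \<open>0 \<le> C\<close>])
    then have "(\<integral>\<^sup>+\<omega>. ennreal (min (max (X \<omega>) 0) C) \<partial>M)
        \<le> (\<integral>\<^sup>+\<omega>. ennreal (min (max (- X \<omega>) 0) 1) \<partial>M)"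
      using pos neg \<open>0 \<le> C\<close> by (simp add: nn_integral_eq_integral ennreal_leI)
    also have "\<dots> \<le> (\<integral>\<^sup>+\<omega>. ennreal (- X \<omega>) \<partial>M)"
    proof (rule nn_integral_mono)
      show "ennreal (min (max (- X \<omega>) 0) 1) \<le> ennreal (- X \<omega>)" for \<omega>
        by (cases "X \<omega> \<le> 0") (auto simp: ennreal_neg intro!: ennreal_leI)
    qed
    finally show ?thesis .
  qed
  have "ennreal (X \<omega>) = (SUP i. ennreal (min (max (X \<omega>) 0) (real i)))" for \<omega>
  proof (rule antisym)
    obtain i :: nat where "max (X \<omega>) 0 \<le> real i" using real_arch_simple by blast
    then show "ennreal (X \<omega>) \<le> (SUP i. ennreal (min (max (X \<omega>) 0) (real i)))"
      by (intro SUP_upper2[OF UNIV_I] ennreal_leI) auto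
    show "(SUP i. ennreal (min (max (X \<omega>) 0) (real i))) \<le> ennreal (X \<omega>)"
      by (rule SUP_least) (cases "X \<omega> \<le> 0"; auto simp: ennreal_neg intro!: ennreal_leI)
  qed
  then have "(\<integral>\<^sup>+\<omega>. ennreal (X \<omega>) \<partial>M) = (\<integral>\<^sup>+\<omega>. (SUP i. ennreal (min (max (X \<omega>) 0) (real i))) \<partial>M)"
    by simp
  also have "\<dots> = (SUP i. (\<integral>\<^sup>+\<omega>. ennreal (min (max (X \<omega>) 0) (real i)) \<partial>M))"
    by (rule nn_integral_monotone_convergence_SUP)
      (auto simp: incseq_def le_fun_def intro!: ennreal_leI)
  also have "\<dots> \<le> (\<integral>\<^sup>+\<omega>. ennreal (- X \<omega>) \<partial>M)"
    by (rule SUP_least) (simp add: clipped)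
  finally show ?thesis .
qed

end

lemma integral_min_dist_le_dS: "(\<integral>\<omega>. min \<bar>Y \<omega> - X \<omega>\<bar> 1 \<partial>PP) \<le> dS Y X"
proof -
  interpret prob_space PP by (rule prob_space_PP)
  have "(\<integral>\<omega>. min \<bar>a * (Y \<omega> - X \<omega>)\<bar> 1 \<partial>PP) \<le> 1" for a
    by (cases "integrable PP (\<lambda>\<omega>. min \<bar>a * (Y \<omega> - X \<omega>)\<bar> 1)")
      (auto simp: not_integrable_integral_eq intro: integral_le_const)
  then have "(\<integral>\<omega>. min \<bar>1 * (Y \<omega> - X \<omega>)\<bar> 1 \<partial>PP) \<le> dS Y X"
    unfolding dS_def by (intro cSUP_upper bdd_aboveI2[where M=1]) auto
  then show ?thesis by simp
qed

lemma integral_truncate_le_dS_Xn1: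
  assumes eps_pos: "\<And>k. k \<ge> 1 \<Longrightarrow> 0 < eps k"
    and mean_one: "\<And>k. k \<ge> 1 \<Longrightarrow> integrable PP (S eps k) \<and> (\<integral>\<omega>. S eps k \<omega> \<partial>PP) = 1"
    and "X \<in> borel_measurable PP" "n \<ge> 1" "Y \<in> Xn1 eps n" "0 \<le> C"
  shows "(\<integral>\<omega>. truncate C (X \<omega>) \<partial>PP) \<le> (C + 1) * dS Y X"
proof -
  interpret finite_measure PP by (rule finite_measure_PP)
  obtain c where Y: "Y = port eps n c" and admissible: "AE \<omega> in PP. port eps n c \<omega> \<ge> -1"
    using \<open>Y \<in> Xn1 eps n\<close> unfolding Xn1_def by auto
  have "integrable PP Y" using integrable_port[OF mean_one] Y by blast
  have "(\<integral>\<omega>. truncate C (Y \<omega>) \<partial>PP) \<le> (\<integral>\<omega>. Y \<omega> \<partial>PP)"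
    using \<open>0 \<le> C\<close> \<open>integrable PP Y\<close> admissible Y by (intro integral_truncate_le) auto
  also have "\<dots> \<le> 0"
    using integral_port[OF mean_one] admissible_port_coeff_sum_nonpos[OF eps_pos \<open>n \<ge> 1\<close> admissible] Y
    by simp
  finally have Y_nonpos: "(\<integral>\<omega>. truncate C (Y \<omega>) \<partial>PP) \<le> 0" .
  have "(\<integral>\<omega>. truncate C (X \<omega>) \<partial>PP)
      \<le> (\<integral>\<omega>. truncate C (Y \<omega>) \<partial>PP) + (C + 1) * (\<integral>\<omega>. min \<bar>Y \<omega> - X \<omega>\<bar> 1 \<partial>PP)"
    using integral_truncate_diff_le[OF \<open>0 \<le> C\<close> \<open>X \<in> borel_measurable PP\<close>
        borel_measurable_integrable[OF \<open>integrable PP Y\<close>]]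
    by simp
  also have "\<dots> \<le> 0 + (C + 1) * dS Y X"
    using Y_nonpos integral_min_dist_le_dS[of Y X] \<open>0 \<le> C\<close> by (intro add_mono mult_left_mono) auto
  finally show ?thesis by simp
qed

lemma X1_separated:
  assumes eps_pos: "\<And>k. k \<ge> 1 \<Longrightarrow> 0 < eps k"
    and mean_one: "\<And>k. k \<ge> 1 \<Longrightarrow> integrable PP (S eps k) \<and> (\<integral>\<omega>. S eps k \<omega> \<partial>PP) = 1"
    and "X \<in> X1 eps"
  shows "(\<integral>\<^sup>+\<omega>. ennreal (X \<omega>) \<partial>PP) \<le> (\<integral>\<^sup>+\<omega>. ennreal (- X \<omega>) \<partial>PP)"
proof -
  interpret finite_measure PP by (rule finite_measure_PP)
  obtain Y where X: "X \<in> borel_measurable PP" and Y: "\<And>j. Y j \<in> (\<Union>n\<in>{1..}. Xn1 eps n)"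
    and lim: "(\<lambda>j. dS (Y j) X) \<longlonglongrightarrow> 0"
    using \<open>X \<in> X1 eps\<close> unfolding X1_def by auto
  have "(\<integral>\<omega>. truncate C (X \<omega>) \<partial>PP) \<le> 0" if "0 \<le> C" for C
  proof (rule LIMSEQ_le_const)
    show "(\<lambda>j. (C + 1) * dS (Y j) X) \<longlonglongrightarrow> 0"
      using tendsto_mult_right_zero[OF lim] by simp
    show "\<exists>N. \<forall>j\<ge>N. (\<integral>\<omega>. truncate C (X \<omega>) \<partial>PP) \<le> (C + 1) * dS (Y j) X"
      using Y integral_truncate_le_dS_Xn1[OF eps_pos mean_one X _ _ \<open>0 \<le> C\<close>] by blast
  qed
  then show ?thesis by (rule nn_integral_le_if_integral_truncate_nonpos[OF X])
qed

lemma Xcal_separated: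
  assumes eps_pos: "\<And>k. k \<ge> 1 \<Longrightarrow> 0 < eps k"
    and mean_one: "\<And>k. k \<ge> 1 \<Longrightarrow> integrable PP (S eps k) \<and> (\<integral>\<omega>. S eps k \<omega> \<partial>PP) = 1"
    and "Z \<in> Xcal eps"
  shows "(\<integral>\<^sup>+\<omega>. ennreal (Z \<omega>) \<partial>PP) \<le> (\<integral>\<^sup>+\<omega>. ennreal (- Z \<omega>) \<partial>PP)"
proof -
  obtain l X where Z: "Z = (\<lambda>\<omega>. l * X \<omega>)" and "l > 0" and "X \<in> X1 eps"
    using \<open>Z \<in> Xcal eps\<close> unfolding Xcal_def by auto
  then have [measurable]: "X \<in> borel_measurable PP" unfolding X1_def by auto
  have "(\<integral>\<^sup>+\<omega>. ennreal (Z \<omega>) \<partial>PP) = ennreal l * (\<integral>\<^sup>+\<omega>. ennreal (X \<omega>) \<partial>PP)"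
    unfolding Z using \<open>l > 0\<close> by (simp add: ennreal_mult' nn_integral_cmult)
  also have "\<dots> \<le> ennreal l * (\<integral>\<^sup>+\<omega>. ennreal (- X \<omega>) \<partial>PP)"
    by (intro mult_left_mono X1_separated[OF eps_pos mean_one \<open>X \<in> X1 eps\<close>]) auto
  also have "\<dots> = (\<integral>\<^sup>+\<omega>. ennreal (- Z \<omega>) \<partial>PP)"
    unfolding Z using \<open>l > 0\<close> by (simp add: ennreal_mult'[symmetric] nn_integral_cmult[symmetric])
  finally show ?thesis .
qed

theorem lemma6p2:
  fixes eps :: "nat \<Rightarrow> real"
  assumes eps_range: "\<And>n. n \<ge> 1 \<Longrightarrow> 0 < eps n \<and> eps n < 1"
    and eps_lim: "eps \<longlonglongrightarrow> 0"
    and mean_one: "\<And>n. n \<ge> 1 \<Longrightarrow> integrable PP (S eps n) \<and> (\<integral>\<omega>. S eps n \<omega> \<partial>PP) = 1"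
  shows "(\<forall>n c. n \<ge> 1 \<longrightarrow> (AE \<omega> in PP. port eps n c \<omega> \<ge> -1) \<longrightarrow>
            (\<Sum>k\<in>{k\<in>{1..n}. c k > 0}. c k) \<le> (\<Sum>k\<in>{k\<in>{1..n}. c k < 0}. \<bar>c k\<bar>))
       \<and> (\<forall>X\<in>Xcal eps. (\<integral>\<^sup>+\<omega>. ennreal (X \<omega>) \<partial>PP) \<le> (\<integral>\<^sup>+\<omega>. ennreal (- X \<omega>) \<partial>PP))"
proof (intro conjI allI impI ballI)
  have eps_pos: "\<And>k. k \<ge> 1 \<Longrightarrow> 0 < eps k" using eps_range by blast
  show "(\<Sum>k\<in>{k\<in>{1..n}. c k > 0}. c k) \<le> (\<Sum>k\<in>{k\<in>{1..n}. c k < 0}. \<bar>c k\<bar>)"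
    if "n \<ge> 1" "AE \<omega> in PP. port eps n c \<omega> \<ge> -1" for n c
    using sum_pos_le_sum_neg_abs[of "{1..n}" c] admissible_port_coeff_sum_nonpos[OF eps_pos that]
    by simp
  show "(\<integral>\<^sup>+\<omega>. ennreal (Z \<omega>) \<partial>PP) \<le> (\<integral>\<^sup>+\<omega>. ennreal (- Z \<omega>) \<partial>PP)" if "Z \<in> Xcal eps" for Z
    using Xcal_separated[OF eps_pos mean_one that] .
qed

end
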